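(* Suppose $(X_i,Y_i)$, $i=1,\dots,n$, are i.i.d. from $P$ and $(X_{n+j},Y_{n+j})$, $j=1,\dots,m$, are i.i.d. from $Q$, independently, where $\frac{dQ}{dP}(x,y)=w(x)$ for a known $w:\mathcal{X}\to(0,\infty)$. Let $f$, a risk map $\mathcal{L}(f,x,y)\in[0,1]$ and a score $s:\mathcal{X}\to[0,1]$ be fixed, $L_i=\mathcal{L}(f,X_i,Y_i)$. Then for any fixed $\gamma\in(0,1)$ and every $j\in\{1,\dots,m\}$, the weighted e-value $E_{\gamma,n+j}$ defined below satisfies $E_{\gamma,n+j}\ge0$ and $\mathbb{E}[L_{n+j}E_{\gamma,n+j}]\le1$.
   Context: Let $w_i=w(X_i)$ for $i\in[n+m]$, $\mathcal{M}=\{s(X_i)\}_{i=1}^{n+m}$, $$\mathrm{FR}_{n+j}(t;\ell)=\frac{w_{n+j}\ell\mathbf{1}\{s(X_{n+j})\le t\}+\sum_{i=1}^nw_iL_i\mathbf{1}\{s(X_i)\le t\}}{1+\sum_{k\ne j}\mathbf{1}\{s(X_{n+k})\le t\}}\cdot\frac{m}{w_{n+j}+\sum_{i=1}^nw_i},$$ $t_{\gamma,n+j}(\ell)=\max\{t\in\mathcal{M}:\mathrm{FR}_{n+j}(t;\ell)\le\gamma\}$ ($\max\emptyset=-\infty$), and $$E_{\gamma,n+j}=\inf_{\ell\in[0,1]}\frac{\mathbf{1}\{s(X_{n+j})\le t_{\gamma,n+j}(\ell)\}(w_{n+j}+\sum_{i=1}^nw_i)}{w_{n+j}\ell\mathbf{1}\{s(X_{n+j})\le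 t_{\gamma,n+j}(\ell)\}+\sum_{i=1}^nw_iL_i\mathbf{1}\{s(X_i)\le t_{\gamma,n+j}(\ell)\}},$$ each ratio $0$ when its numerator is $0$ and $+\infty$ when the numerator is positive and denominator $0$; $E_{\gamma,n+j}=0$ if $\inf_\ell t_{\gamma,n+j}(\ell)=-\infty$. *)

theory Defs
  imports "HOL-Probability.Probability"
begin

text \<open>Realised data: wv i = w(X_i), sv i = s(X_i), Lv i = L_i for i in 1..n+m
  (indices 1..n calibration, n+1..n+m test).\<close>

definition FR :: "nat \<Rightarrow> nat \<Rightarrow> (nat \<Rightarrow> real) \<Rightarrow> (nat \<Rightarrow> real) \<Rightarrow> (nat \<Rightarrow> real)
    \<Rightarrow> nat \<Rightarrow> real \<Rightarrow> real \<Rightarrow> real" where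
  "FR n m wv sv Lv j t l =
     ((wv (n+j) * l * (if sv (n+j) \<le> t then 1 else 0)
        + (\<Sum>i=1..n. wv i * Lv i * (if sv i \<le> t then 1 else 0)))
      / (1 + real (card {k\<in>{1..m}. k \<noteq> j \<and> sv (n+k) \<le> t})))
     * (real m / (wv (n+j) + (\<Sum>i=1..n. wv i)))"

definition score_set :: "nat \<Rightarrow> nat \<Rightarrow> (nat \<Rightarrow> real) \<Rightarrow> real set" where
  "score_set n m sv = sv ` {1..n+m}"

definition tgam :: "nat \<Rightarrow> nat \<Rightarrow> (nat \<Rightarrow> real) \<Rightarrow> (nat \<Rightarrow> real) \<Rightarrow> (nat \<Rightarrow> real)
    \<Rightarrow> real \<Rightarrow> nat \<Rightarrow> real \<Rightarrow> ereal" where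
  "tgam n m wv sv Lv \<gamma> j l =
     (let T = {t \<in> score_set n m sv. FR n m wv sv Lv j t l \<le> \<gamma>}
      in if T = {} then -\<infinity> else ereal (Max T))"

definition Eratio :: "nat \<Rightarrow> nat \<Rightarrow> (nat \<Rightarrow> real) \<Rightarrow> (nat \<Rightarrow> real) \<Rightarrow> (nat \<Rightarrow> real)
    \<Rightarrow> real \<Rightarrow> nat \<Rightarrow> real \<Rightarrow> ereal" where
  "Eratio n m wv sv Lv \<gamma> j l =
     (let t = tgam n m wv sv Lv \<gamma> j l;
          num = (if ereal (sv (n+j)) \<le> t then 1 else 0) * (wv (n+j) + (\<Sum>i=1..n. wv i));
          den = wv (n+j) * l * (if ereal (sv (n+j)) \<le> t then 1 else 0)
                + (\<Sum>i=1..n. wv i * Lv i * (if ereal (sv i) \<le> t then 1 else 0))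
      in if num = 0 then 0 else if den = 0 then \<infinity> else ereal (num / den))"

definition Evalue :: "nat \<Rightarrow> nat \<Rightarrow> (nat \<Rightarrow> real) \<Rightarrow> (nat \<Rightarrow> real) \<Rightarrow> (nat \<Rightarrow> real)
    \<Rightarrow> real \<Rightarrow> nat \<Rightarrow> ereal" where
  "Evalue n m wv sv Lv \<gamma> j =
     (if (INF l\<in>{0..1}. tgam n m wv sv Lv \<gamma> j l) = -\<infinity> then 0
      else (INF l\<in>{0..1}. Eratio n m wv sv Lv \<gamma> j l))"

end

theory Submission
  imports Defs "HOL-Combinatorics.Permutations"
begin

(* Taking l = L_{n+j} in the infimum gives L_{n+j} E_{n+j} <= L_{n+j} R_{n+j}, where the threshold and
   the ratio R at l = L_{n+j} are symmetric functions of the augmented sample S = {1..n} union {n+j}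
   (R_k denoting the ratio computed for the point k of S).  Deterministically
   sum_{k in S} w_k L_k R_k <= sum_{k in S} w_k.  As the test point has law w P, the expectation of
   L_{n+j} R_{n+j} equals that of w_{n+j} L_{n+j} R_{n+j} when all points of S are drawn from P; these
   are then exchangeable, so it is the average over k in S of E[w_k L_k R_k], which is at most
   (n+1)^{-1} sum_{k in S} E_P[w_k] = 1. *)

definition eratio :: "real \<Rightarrow> real \<Rightarrow> ereal" where
  "eratio a b = (if a = 0 then 0 else if b = 0 then \<infinity> else ereal (a / b))"

lemma sum_mult_eratio_le:
  fixes a c :: "'i \<Rightarrow> real"
  assumes S: "finite S" and a: "\<And>k. k \<in> S \<Longrightarrow> 0 \<le> a k" and c: "\<And>k. k \<in> S \<Longrightarrow> 0 \<le> c k"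
    and W: "0 \<le> W"
  shows "(\<Sum>k\<in>S. ennreal (a k) * e2ennreal (eratio (c k * W) (\<Sum>i\<in>S. a i * c i))) \<le> ennreal W"
proof (cases "(\<Sum>i\<in>S. a i * c i) = 0")
  case True
  then have "a k * c k = 0" if "k \<in> S" for k
    using S a c that by (subst (asm) sum_nonneg_eq_0_iff) auto
  then have "ennreal (a k) * e2ennreal (eratio (c k * W) 0) = 0" if "k \<in> S" for k
    using that by (cases "a k = 0") (auto simp: eratio_def)
  then show ?thesis using True by (simp add: sum.neutral)
next
  case False
  define D where "D = (\<Sum>i\<in>S. a i * c i)"
  have "0 < D"
    using False a c by (simp add: D_def order_less_le sum_nonneg)
  then have "ennreal (a k) * e2ennreal (eratio (c k * W) D) = ennreal (a k * c k * W / D)"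
    if "k \<in> S" for k
    using a[OF that] c[OF that] W
    by (simp add: eratio_def ennreal_mult[symmetric] mult.assoc)
  then have "(\<Sum>k\<in>S. ennreal (a k) * e2ennreal (eratio (c k * W) D)) = ennreal (\<Sum>k\<in>S. a k * c k * W / D)"
    using a c W \<open>0 < D\<close> by simp
  also have "(\<Sum>k\<in>S. a k * c k * W / D) = W"
    using \<open>0 < D\<close> by (simp add: D_def sum_divide_distrib[symmetric] sum_distrib_right[symmetric])
  finally show ?thesis by (simp add: D_def)
qed


lemma Eratio_cong:
  assumes j: "j \<in> {1..m}"
    and w: "\<And>i. i \<in> {1..n+m} \<Longrightarrow> wv i = wv' i"
    and s: "\<And>i. i \<in> {1..n+m} \<Longrightarrow> sv i = sv' i"
    and L: "\<And>i. i \<in> {1..n+m} \<Longrightarrow> Lv i = Lv' i"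
  shows "Eratio n m wv sv Lv \<gamma> j l = Eratio n m wv' sv' Lv' \<gamma> j l"
proof -
  have nj: "n + j \<in> {1..n+m}" using j by auto
  have calib: "(\<Sum>i=1..n. g (wv i) (sv i) (Lv i)) = (\<Sum>i=1..n. g (wv' i) (sv' i) (Lv' i))"
    for g :: "real \<Rightarrow> real \<Rightarrow> real \<Rightarrow> real"
    using w s L by (intro sum.cong) auto
  have "{k\<in>{1..m}. k \<noteq> j \<and> sv (n+k) \<le> t} = {k\<in>{1..m}. k \<noteq> j \<and> sv' (n+k) \<le> t}" for t
    using s by auto
  then have "FR n m wv sv Lv j t l' = FR n m wv' sv' Lv' j t l'" for t l'
    unfolding FR_def using calib[of "\<lambda>a b c. a * c * (if b \<le> t then 1 else 0)"] calib[of "\<lambda>a b c. a"]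
      w[OF nj] s[OF nj] by simp
  moreover have "score_set n m sv = score_set n m sv'"
    unfolding score_set_def using s by (intro image_cong) auto
  ultimately have "tgam n m wv sv Lv \<gamma> j l' = tgam n m wv' sv' Lv' \<gamma> j l'" for l'
    unfolding tgam_def by simp
  then show ?thesis
    unfolding Eratio_def Let_def
    using calib[of "\<lambda>a b c. a * c * (if ereal b \<le> tgam n m wv' sv' Lv' \<gamma> j l then 1 else 0)"]
      calib[of "\<lambda>a b c. a"] w[OF nj] s[OF nj] by simp
qed

lemma Evalue_nonneg:
  assumes "0 < wv (n+j)" "\<And>i. i \<in> {1..n} \<Longrightarrow> 0 < wv i \<and> 0 \<le> Lv i"
  shows "0 \<le> Evalue n m wv sv Lv \<gamma> j"
proof -
  have "0 \<le> Eratio n m wv sv Lv \<gamma> j l" if l: "l \<in> {0..1}" for l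
  proof -
    define t where "t = tgam n m wv sv Lv \<gamma> j l"
    have "0 \<le> wv i * Lv i" if "i \<in> {1..n}" for i
      using assms(2)[OF that] by simp
    then have "0 \<le> wv (n+j) * l * (if ereal (sv (n+j)) \<le> t then 1 else 0)
                + (\<Sum>i=1..n. wv i * Lv i * (if ereal (sv i) \<le> t then 1 else 0))"
      using assms(1) l by (intro add_nonneg_nonneg sum_nonneg) auto
    moreover have "0 \<le> wv (n+j) + (\<Sum>i=1..n. wv i)"
      using assms by (intro add_nonneg_nonneg sum_nonneg) (auto intro: less_imp_le)
    ultimately show ?thesis
      unfolding Eratio_def Let_def t_def[symmetric] by (auto intro!: divide_nonneg_nonneg)
  qed
  then show ?thesis
    unfolding Evalue_def by (auto intro: INF_greatest)
qed

lemma risk_mult_Evalue_le: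
  assumes "0 \<le> Lv (n+j)" "Lv (n+j) \<le> 1"
  shows "ennreal (Lv (n+j)) * e2ennreal (Evalue n m wv sv Lv \<gamma> j)
      \<le> ennreal (Lv (n+j)) * e2ennreal (Eratio n m wv sv Lv \<gamma> j (Lv (n+j)))"
proof (cases "(INF l\<in>{0..1}. tgam n m wv sv Lv \<gamma> j l) = -\<infinity>")
  case False
  have "(INF l\<in>{0..1}. Eratio n m wv sv Lv \<gamma> j l) \<le> Eratio n m wv sv Lv \<gamma> j (Lv (n+j))"
    using assms by (intro INF_lower) auto
  then show ?thesis
    using False unfolding Evalue_def by (simp add: mult_left_mono e2ennreal_mono)
qed (simp add: Evalue_def)

lemma ereal_Max_filter_eq_Max_image:
  fixes f :: "'i \<Rightarrow> real"
  assumes "finite A" "A \<noteq> {}"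
  shows "(if {t \<in> f ` A. P t} = {} then -\<infinity> else ereal (Max {t \<in> f ` A. P t}))
       = Max ((\<lambda>r. if P (f r) then ereal (f r) else -\<infinity>) ` A)"
proof (cases "{t \<in> f ` A. P t} = {}")
  case True
  then have "(\<lambda>r. if P (f r) then ereal (f r) else -\<infinity>) ` A = {-\<infinity>}"
    using assms by auto
  then show ?thesis using True by (simp only: if_True Max_singleton simp_thms)
next
  case False
  let ?T = "{t \<in> f ` A. P t}"
  have fin: "finite ?T" using assms by auto
  obtain r0 where r0: "r0 \<in> A" "P (f r0)" "f r0 = Max ?T"
    using Max_in[OF fin False] by auto
  have "Max ((\<lambda>r. if P (f r) then ereal (f r) else -\<infinity>) ` A) = ereal (Max ?T)"
  proof (rule Max_eqI)
    show "y \<le> ereal (Max ?T)" if "y \<in> (\<lambda>r. if P (f r) then ereal (f r) else -\<infinity>) ` A" for y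
      using that Max_ge[OF fin] by auto
    show "ereal (Max ?T) \<in> (\<lambda>r. if P (f r) then ereal (f r) else -\<infinity>) ` A"
      using r0 by (auto intro!: image_eqI[where x=r0])
  qed (use assms in auto)
  then show ?thesis using False by simp
qed

lemma Eratio_measurable:
  assumes j: "j \<in> {1..m}"
    and meas: "\<And>i. i \<in> {1..n+m} \<Longrightarrow> (\<lambda>b. wv i b) \<in> borel_measurable N"
      "\<And>i. i \<in> {1..n+m} \<Longrightarrow> (\<lambda>b. sv i b) \<in> borel_measurable N"
      "\<And>i. i \<in> {1..n+m} \<Longrightarrow> (\<lambda>b. Lv i b) \<in> borel_measurable N"
    and [measurable]: "l \<in> borel_measurable N"
  shows "(\<lambda>b. Eratio n m (\<lambda>i. wv i b) (\<lambda>i. sv i b) (\<lambda>i. Lv i b) \<gamma> j (l b)) \<in> borel_measurable N"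
proof -
  define restr where "restr h i b = (if i \<in> {1..n+m} then h i b else 0)" for h :: "nat \<Rightarrow> 'a \<Rightarrow> real" and i b
  have [measurable]: "(\<lambda>b. restr h i b) \<in> borel_measurable N"
    if "\<And>i. i \<in> {1..n+m} \<Longrightarrow> (\<lambda>b. h i b) \<in> borel_measurable N" for h i
    using that unfolding restr_def by (cases "i \<in> {1..n+m}") auto
  have card_eq_sum: "real (card {k\<in>{1..m}. P k}) = (\<Sum>k\<in>{1..m}. if P k then 1 else 0)" for P
    by (simp add: sum.If_cases Int_def conj_commute)
  have tgam_Max: "tgam n m wv' sv' Lv' \<gamma> j l' =
    Max ((\<lambda>r. if FR n m wv' sv' Lv' j (sv' r) l' \<le> \<gamma> then ereal (sv' r) else -\<infinity>) ` {1..n+m})"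
    for wv' sv' Lv' l'
    unfolding tgam_def score_set_def Let_def using j by (intro ereal_Max_filter_eq_Max_image) auto
  have [measurable]: "(\<lambda>b. tgam n m (\<lambda>i. restr wv i b) (\<lambda>i. restr sv i b) (\<lambda>i. restr Lv i b) \<gamma> j (l b))
      \<in> borel_measurable N"
    using meas unfolding tgam_Max FR_def card_eq_sum by measurable
  have "(\<lambda>b. Eratio n m (\<lambda>i. restr wv i b) (\<lambda>i. restr sv i b) (\<lambda>i. restr Lv i b) \<gamma> j (l b))
      \<in> borel_measurable N"
    using meas unfolding Eratio_def Let_def by measurable
  moreover have "Eratio n m (\<lambda>i. restr wv i b) (\<lambda>i. restr sv i b) (\<lambda>i. restr Lv i b) \<gamma> j (l b)
      = Eratio n m (\<lambda>i. wv i b) (\<lambda>i. sv i b) (\<lambda>i. Lv i b) \<gamma> j (l b)" for b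
    using j by (intro Eratio_cong) (auto simp: restr_def)
  ultimately show ?thesis
    by simp
qed

section \<open>Oracle quantities\<close>

definition augmented_calib :: "nat \<Rightarrow> nat \<Rightarrow> nat set" where
  "augmented_calib n j = insert (n + j) {1..n}"

text \<open>FR, tgam and (for k = n+j) Eratio evaluated at l = Lv (n+j), the risk of the test point itself,
  rewritten so that they are visibly symmetric in the points of the augmented calibration sample.\<close>

definition oracle_FR :: "nat \<Rightarrow> nat \<Rightarrow> (nat \<Rightarrow> real) \<Rightarrow> (nat \<Rightarrow> real) \<Rightarrow> (nat \<Rightarrow> real)
    \<Rightarrow> nat \<Rightarrow> real \<Rightarrow> real" where
  "oracle_FR n m wv sv Lv j t =
     (\<Sum>i\<in>augmented_calib n j. wv i * Lv i * (if sv i \<le> t then 1 else 0))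
      / (1 + real (card {k\<in>{1..m}. k \<noteq> j \<and> sv (n+k) \<le> t}))
     * (real m / (\<Sum>i\<in>augmented_calib n j. wv i))"

definition oracle_threshold :: "nat \<Rightarrow> nat \<Rightarrow> (nat \<Rightarrow> real) \<Rightarrow> (nat \<Rightarrow> real) \<Rightarrow> (nat \<Rightarrow> real)
    \<Rightarrow> real \<Rightarrow> nat \<Rightarrow> ereal" where
  "oracle_threshold n m wv sv Lv \<gamma> j =
     (let T = {t \<in> score_set n m sv. oracle_FR n m wv sv Lv j t \<le> \<gamma>}
      in if T = {} then -\<infinity> else ereal (Max T))"

definition oracle_Eratio :: "nat \<Rightarrow> nat \<Rightarrow> (nat \<Rightarrow> real) \<Rightarrow> (nat \<Rightarrow> real) \<Rightarrow> (nat \<Rightarrow> real)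
    \<Rightarrow> real \<Rightarrow> nat \<Rightarrow> nat \<Rightarrow> ereal" where
  "oracle_Eratio n m wv sv Lv \<gamma> j k =
     (let c = (\<lambda>i. if ereal (sv i) \<le> oracle_threshold n m wv sv Lv \<gamma> j then 1 else 0)
      in eratio (c k * (\<Sum>i\<in>augmented_calib n j. wv i))
           (\<Sum>i\<in>augmented_calib n j. wv i * Lv i * c i))"

lemma sum_augmented_calib:
  "1 \<le> j \<Longrightarrow> (\<Sum>i\<in>augmented_calib n j. g i) = g (n+j) + (\<Sum>i=1..n. g i)"
  unfolding augmented_calib_def by (subst sum.insert) auto

lemma Eratio_at_risk_eq_oracle_Eratio:
  assumes "1 \<le> j"
  shows "Eratio n m wv sv Lv \<gamma> j (Lv (n+j)) = oracle_Eratio n m wv sv Lv \<gamma> j (n+j)"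
proof -
  have "FR n m wv sv Lv j t (Lv (n+j)) = oracle_FR n m wv sv Lv j t" for t
    unfolding FR_def oracle_FR_def using assms by (simp add: sum_augmented_calib mult.assoc)
  then have "tgam n m wv sv Lv \<gamma> j (Lv (n+j)) = oracle_threshold n m wv sv Lv \<gamma> j"
    unfolding tgam_def oracle_threshold_def by simp
  then show ?thesis
    unfolding Eratio_def oracle_Eratio_def eratio_def Let_def
    using assms by (simp add: sum_augmented_calib mult.assoc)
qed

context
  fixes n m j :: nat and \<sigma> :: "nat \<Rightarrow> nat"
  assumes j: "j \<in> {1..m}" and \<sigma>: "\<sigma> permutes augmented_calib n j"
begin

lemma oracle_FR_permute:
  "oracle_FR n m (wv \<circ> \<sigma>) (sv \<circ> \<sigma>) (Lv \<circ> \<sigma>) j t = oracle_FR n m wv sv Lv j t"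
proof -
  have "\<sigma> (n+k) = n+k" if "k \<in> {1..m}" "k \<noteq> j" for k
    using that by (intro permutes_not_in[OF \<sigma>]) (auto simp: augmented_calib_def)
  then have "{k\<in>{1..m}. k \<noteq> j \<and> sv (\<sigma> (n+k)) \<le> t} = {k\<in>{1..m}. k \<noteq> j \<and> sv (n+k) \<le> t}"
    by auto
  then show ?thesis
    unfolding oracle_FR_def
    using sum.permute[OF \<sigma>, of wv] sum.permute[OF \<sigma>, of "\<lambda>i. wv i * Lv i * (if sv i \<le> t then 1 else 0)"]
    by (simp add: comp_def)
qed

lemma score_set_permute: "score_set n m (sv \<circ> \<sigma>) = score_set n m sv"
proof -
  have "\<sigma> permutes {1..n+m}"
    using j by (intro permutes_subset[OF \<sigma>]) (auto simp: augmented_calib_def)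
  then show ?thesis
    unfolding score_set_def image_comp[symmetric] by (simp add: permutes_image)
qed

lemma oracle_threshold_permute:
  "oracle_threshold n m (wv \<circ> \<sigma>) (sv \<circ> \<sigma>) (Lv \<circ> \<sigma>) \<gamma> j = oracle_threshold n m wv sv Lv \<gamma> j"
  unfolding oracle_threshold_def oracle_FR_permute score_set_permute ..

lemma oracle_Eratio_permute:
  "oracle_Eratio n m (wv \<circ> \<sigma>) (sv \<circ> \<sigma>) (Lv \<circ> \<sigma>) \<gamma> j k = oracle_Eratio n m wv sv Lv \<gamma> j (\<sigma> k)"
  unfolding oracle_Eratio_def oracle_threshold_permute Let_def
  using sum.permute[OF \<sigma>, of wv]
    sum.permute[OF \<sigma>, of "\<lambda>i. wv i * Lv i * (if ereal (sv i) \<le> oracle_threshold n m wv sv Lv \<gamma> j then 1 else 0)"]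
  by (simp add: comp_def)

end

lemma sum_Eratio_transpose_le:
  assumes j: "j \<in> {1..m}"
    and pos: "\<And>i. i \<in> augmented_calib n j \<Longrightarrow> 0 < wv i \<and> 0 \<le> Lv i"
  shows "(\<Sum>k\<in>augmented_calib n j. ennreal (wv k * Lv k) * e2ennreal (Eratio n m
            (wv \<circ> Transposition.transpose k (n+j)) (sv \<circ> Transposition.transpose k (n+j))
            (Lv \<circ> Transposition.transpose k (n+j)) \<gamma> j (Lv k)))
         \<le> ennreal (\<Sum>k\<in>augmented_calib n j. wv k)"
proof -
  let ?S = "augmented_calib n j"
  have "Eratio n m (wv \<circ> Transposition.transpose k (n+j)) (sv \<circ> Transposition.transpose k (n+j))
          (Lv \<circ> Transposition.transpose k (n+j)) \<gamma> j (Lv k) = oracle_Eratio n m wv sv Lv \<gamma> j k"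
    if k: "k \<in> ?S" for k
  proof -
    define \<tau> where "\<tau> = Transposition.transpose k (n+j)"
    have \<tau>: "\<tau> permutes ?S"
      unfolding \<tau>_def using k by (intro permutes_swap_id) (auto simp: augmented_calib_def)
    have "Lv k = (Lv \<circ> \<tau>) (n+j)" "\<tau> (n+j) = k"
      by (simp_all add: \<tau>_def)
    then show ?thesis
      using Eratio_at_risk_eq_oracle_Eratio[of j n m "wv \<circ> \<tau>" "sv \<circ> \<tau>" "Lv \<circ> \<tau>" \<gamma>]
        oracle_Eratio_permute[OF j \<tau>] j unfolding \<tau>_def by simp
  qed
  then have "(\<Sum>k\<in>?S. ennreal (wv k * Lv k) * e2ennreal (Eratio n m
            (wv \<circ> Transposition.transpose k (n+j)) (sv \<circ> Transposition.transpose k (n+j))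
            (Lv \<circ> Transposition.transpose k (n+j)) \<gamma> j (Lv k)))
      = (\<Sum>k\<in>?S. ennreal (wv k * Lv k) * e2ennreal (oracle_Eratio n m wv sv Lv \<gamma> j k))"
    by simp
  also have "\<dots> \<le> ennreal (\<Sum>k\<in>?S. wv k)"
    unfolding oracle_Eratio_def Let_def
  proof (rule sum_mult_eratio_le)
    show "finite ?S" by (simp add: augmented_calib_def)
    show "0 \<le> wv k * Lv k" if "k \<in> ?S" for k
      using pos[OF that] by simp
    show "0 \<le> (\<Sum>k\<in>?S. wv k)"
      using pos by (intro sum_nonneg) (simp add: less_imp_le)
  qed simp
  finally show ?thesis .
qed

section \<open>Product measures\<close>

lemma PiM_density_component:
  fixes D D' :: "'i \<Rightarrow> 'a measure"
  assumes I: "finite I" "c \<in> I"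
    and prob: "\<And>i. prob_space (D i)" "\<And>i. prob_space (D' i)"
    and Dc: "D c = density (D' c) \<rho>" and \<rho>: "\<rho> \<in> borel_measurable (D' c)"
    and D: "\<And>i. i \<noteq> c \<Longrightarrow> D i = D' i"
  shows "PiM I D = density (PiM I D') (\<lambda>z. \<rho> (z c))"
proof -
  interpret D: product_sigma_finite D
    unfolding product_sigma_finite_def using prob(1) prob_space_imp_sigma_finite by blast
  interpret D': product_sigma_finite D'
    unfolding product_sigma_finite_def using prob(2) prob_space_imp_sigma_finite by blast
  have sets_D: "sets (D i) = sets (D' i)" for i
    using D Dc by (cases "i = c") auto
  have [measurable]: "(\<lambda>z. \<rho> (z c)) \<in> borel_measurable (PiM I D')"
    using measurable_compose[OF measurable_component_singleton[OF I(2), of D'] \<rho>] .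
  show ?thesis
  proof (rule D.PiM_eqI[symmetric])
    fix A assume A: "\<And>i. i \<in> I \<Longrightarrow> A i \<in> sets (D i)"
    define f where "f i y = (if i = c then \<rho> y else 1) * indicator (A i) y" for i y
    have "z \<in> space (PiM I D') \<Longrightarrow> \<rho> (z c) * indicator (Pi\<^sub>E I A) z = (\<Prod>i\<in>I. f i (z i))" for z
    proof -
      assume z: "z \<in> space (PiM I D')"
      have "indicator (Pi\<^sub>E I A) z = (\<Prod>i\<in>I. indicator (A i) (z i) :: ennreal)"
        using z I(1) by (auto simp: indicator_def space_PiM PiE_iff intro: prod_zero)
      then show ?thesis
        using I by (simp add: f_def prod.distrib)
    qed
    then have "emeasure (density (PiM I D') (\<lambda>z. \<rho> (z c))) (Pi\<^sub>E I A)
        = (\<integral>\<^sup>+ z. (\<Prod>i\<in>I. f i (z i)) \<partial>PiM I D')"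
      using A I(1) sets_D by (subst emeasure_density) (auto intro!: sets_PiM_I_finite nn_integral_cong)
    also have "\<dots> = (\<Prod>i\<in>I. integral\<^sup>N (D' i) (f i))"
    proof (intro D'.product_nn_integral_prod)
      show "f i \<in> borel_measurable (D' i)" if "i \<in> I" for i
        using A[OF that] \<rho> sets_D unfolding f_def
        by (cases "i = c") (auto intro!: borel_measurable_times_ennreal borel_measurable_indicator)
    qed (use I in auto)
    also have "\<dots> = (\<Prod>i\<in>I. emeasure (D i) (A i))"
    proof (rule prod.cong[OF refl])
      show "integral\<^sup>N (D' i) (f i) = emeasure (D i) (A i)" if "i \<in> I" for i
        using A[OF that] \<rho> sets_D unfolding f_def
        by (cases "i = c") (simp_all add: Dc D emeasure_density mult.commute)
    qed
    finally show "emeasure (density (PiM I D') (\<lambda>z. \<rho> (z c))) (Pi\<^sub>E I A) = (\<Prod>i\<in>I. emeasure (D i) (A i))" .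
  qed (use I sets_D in \<open>auto intro!: sets_PiM_cong\<close>)
qed

lemma
  fixes D :: "'i \<Rightarrow> 'a measure"
  assumes ab: "a \<in> I" "b \<in> I" and prob: "\<And>i. prob_space (D i)" and D: "D a = D b"
  shows measurable_PiM_transpose:
      "(\<lambda>z. \<lambda>i\<in>I. z (Transposition.transpose a b i)) \<in> PiM I D \<rightarrow>\<^sub>M PiM I D"
    and distr_PiM_transpose:
      "distr (PiM I D) (PiM I D) (\<lambda>z. \<lambda>i\<in>I. z (Transposition.transpose a b i)) = PiM I D"
proof -
  let ?\<tau> = "Transposition.transpose a b"
  have \<tau>: "bij_betw ?\<tau> I I"
    using ab by simp
  have PiM_eq: "(\<Pi>\<^sub>M i\<in>I. D (?\<tau> i)) = PiM I D"
    using D by (intro PiM_cong) (auto simp: Transposition.transpose_def)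
  have "(\<lambda>z. \<lambda>i\<in>I. z (?\<tau> i)) \<in> PiM I D \<rightarrow>\<^sub>M (\<Pi>\<^sub>M i\<in>I. D (?\<tau> i))"
    using \<tau> by (intro measurable_restrict measurable_component_singleton) (auto simp: bij_betw_def)
  then show "(\<lambda>z. \<lambda>i\<in>I. z (?\<tau> i)) \<in> PiM I D \<rightarrow>\<^sub>M PiM I D"
    unfolding PiM_eq .
  have "distr (PiM I D) (\<Pi>\<^sub>M i\<in>I. D (?\<tau> i)) (\<lambda>z. \<lambda>i\<in>I. z (?\<tau> i)) = (\<Pi>\<^sub>M i\<in>I. D (?\<tau> i))"
    using \<tau> prob by (intro distr_PiM_reindex) (auto simp: bij_betw_def)
  then show "distr (PiM I D) (PiM I D) (\<lambda>z. \<lambda>i\<in>I. z (?\<tau> i)) = PiM I D"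
    unfolding PiM_eq .
qed

lemma nn_integral_PiM_sum_transpose:
  fixes D :: "'i \<Rightarrow> 'a measure"
  assumes S: "finite S" "S \<subseteq> I" "c \<in> S" and prob: "\<And>i. prob_space (D i)"
    and D: "\<And>k. k \<in> S \<Longrightarrow> D k = D c" and F: "F \<in> borel_measurable (PiM I D)"
  shows "of_nat (card S) * integral\<^sup>N (PiM I D) F
       = (\<integral>\<^sup>+ z. (\<Sum>k\<in>S. F (\<lambda>i\<in>I. z (Transposition.transpose k c i))) \<partial>PiM I D)"
proof -
  have \<tau>: "(\<lambda>z. \<lambda>i\<in>I. z (Transposition.transpose k c i)) \<in> PiM I D \<rightarrow>\<^sub>M PiM I D"
    and distr_\<tau>: "distr (PiM I D) (PiM I D) (\<lambda>z. \<lambda>i\<in>I. z (Transposition.transpose k c i)) = PiM I D"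
    if "k \<in> S" for k
    using S that prob D[OF that] by (auto intro: measurable_PiM_transpose distr_PiM_transpose)
  have "of_nat (card S) * integral\<^sup>N (PiM I D) F = (\<Sum>k\<in>S. integral\<^sup>N (PiM I D) F)"
    by simp
  also have "\<dots> = (\<Sum>k\<in>S. \<integral>\<^sup>+ z. F (\<lambda>i\<in>I. z (Transposition.transpose k c i)) \<partial>PiM I D)"
  proof (rule sum.cong[OF refl])
    fix k assume "k \<in> S"
    show "integral\<^sup>N (PiM I D) F = (\<integral>\<^sup>+ z. F (\<lambda>i\<in>I. z (Transposition.transpose k c i)) \<partial>PiM I D)"
      using nn_integral_distr[OF \<tau>[OF \<open>k \<in> S\<close>], of F] F unfolding distr_\<tau>[OF \<open>k \<in> S\<close>] by simp
  qed
  also have "\<dots> = (\<integral>\<^sup>+ z. (\<Sum>k\<in>S. F (\<lambda>i\<in>I. z (Transposition.transpose k c i))) \<partial>PiM I D)"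
    using \<tau> F by (intro nn_integral_sum[symmetric]) auto
  finally show ?thesis .
qed

lemma nn_integral_PiM_component:
  assumes "i \<in> I" "\<And>i. prob_space (D i)" "h \<in> borel_measurable (D i)"
  shows "(\<integral>\<^sup>+ z. h (z i) \<partial>PiM I D) = integral\<^sup>N (D i) h"
  using assms nn_integral_distr[of "\<lambda>z. z i" "PiM I D" "D i" h]
  by (simp add: distr_PiM_component)

lemma nn_integral_PiM_component_prob_density:
  assumes "k \<in> I" "\<And>i. prob_space (D i)" "D k = P" "\<rho> \<in> borel_measurable P"
    and "prob_space (density P \<rho>)"
  shows "(\<integral>\<^sup>+ z. \<rho> (z k) \<partial>PiM I D) = 1"
  using assms nn_integral_PiM_component[of k I D \<rho>] nn_integral_density[of \<rho> P "\<lambda>_. 1"]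
    prob_space.emeasure_space_1[of "density P \<rho>"] by simp

lemma measurable_PiM_component_comp:
  assumes "i \<in> I" "sets (D i) = sets K" "h \<in> K \<rightarrow>\<^sub>M N"
  shows "(\<lambda>z. h (z i)) \<in> PiM I D \<rightarrow>\<^sub>M N"
  using measurable_compose[OF measurable_component_singleton[OF assms(1), of D], of h N]
    measurable_cong_sets[OF assms(2) refl] assms(3) by blast

lemma (in prob_space) nn_integral_indep_vars_PiM:
  assumes I: "I \<noteq> {}" and indep: "indep_vars (\<lambda>_. K) V I"
    and V: "\<And>i. i \<in> I \<Longrightarrow> V i \<in> M \<rightarrow>\<^sub>M K" and D: "\<And>i. i \<in> I \<Longrightarrow> distr M K (V i) = D i"
    and G: "G \<in> borel_measurable (PiM I (\<lambda>_. K))"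
  shows "(\<integral>\<^sup>+ \<omega>. G (\<lambda>i\<in>I. V i \<omega>) \<partial>M) = integral\<^sup>N (PiM I D) G"
proof -
  have "distr M (PiM I (\<lambda>_. K)) (\<lambda>\<omega>. \<lambda>i\<in>I. V i \<omega>) = (\<Pi>\<^sub>M i\<in>I. distr M K (V i))"
    using indep indep_vars_iff_distr_eq_PiM'[where M' = "\<lambda>_. K", OF I V] by simp
  also have "\<dots> = PiM I D"
    using D by (intro PiM_cong) auto
  finally have "distr M (PiM I (\<lambda>_. K)) (\<lambda>\<omega>. \<lambda>i\<in>I. V i \<omega>) = PiM I D" .
  moreover have "(\<integral>\<^sup>+ \<omega>. G (\<lambda>i\<in>I. V i \<omega>) \<partial>M)
      = integral\<^sup>N (distr M (PiM I (\<lambda>_. K)) (\<lambda>\<omega>. \<lambda>i\<in>I. V i \<omega>)) G"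
    using V G by (intro nn_integral_distr[symmetric] measurable_restrict) auto
  ultimately show ?thesis
    by simp
qed

definition risk_mult_Eratio_at_risk :: "nat \<Rightarrow> nat \<Rightarrow> ('a \<Rightarrow> real) \<Rightarrow> ('a \<Rightarrow> real) \<Rightarrow> ('a \<Rightarrow> real)
    \<Rightarrow> real \<Rightarrow> nat \<Rightarrow> (nat \<Rightarrow> 'a) \<Rightarrow> ennreal" where
  "risk_mult_Eratio_at_risk n m w s L \<gamma> j z =
     ennreal (L (z (n+j))) *
     e2ennreal (Eratio n m (\<lambda>i. w (z i)) (\<lambda>i. s (z i)) (\<lambda>i. L (z i)) \<gamma> j (L (z (n+j))))"

lemma risk_mult_Evalue_le_Eratio_at_risk:
  fixes z :: "nat \<Rightarrow> 'a"
  assumes j: "j \<in> {1..m}" and L: "0 \<le> L (z (n+j))" "L (z (n+j)) \<le> 1"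
  shows "ennreal (L (z (n+j))) * e2ennreal (Evalue n m (\<lambda>i. w (z i)) (\<lambda>i. s (z i)) (\<lambda>i. L (z i)) \<gamma> j)
      \<le> risk_mult_Eratio_at_risk n m w s L \<gamma> j (\<lambda>i\<in>{1..n+m}. z i)"
proof -
  have "ennreal (L (z (n+j))) * e2ennreal (Evalue n m (\<lambda>i. w (z i)) (\<lambda>i. s (z i)) (\<lambda>i. L (z i)) \<gamma> j)
      \<le> ennreal (L (z (n+j))) * e2ennreal
            (Eratio n m (\<lambda>i. w (z i)) (\<lambda>i. s (z i)) (\<lambda>i. L (z i)) \<gamma> j (L (z (n+j))))"
    using L by (rule risk_mult_Evalue_le)
  also have "\<dots> = risk_mult_Eratio_at_risk n m w s L \<gamma> j (\<lambda>i\<in>{1..n+m}. z i)"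
  proof -
    have "(\<lambda>i\<in>{1..n+m}. z i) (n+j) = z (n+j)"
      using j by simp
    moreover have "Eratio n m (\<lambda>i. w (z i)) (\<lambda>i. s (z i)) (\<lambda>i. L (z i)) \<gamma> j l
        = Eratio n m (\<lambda>i. w (restrict z {1..n+m} i)) (\<lambda>i. s (restrict z {1..n+m} i))
            (\<lambda>i. L (restrict z {1..n+m} i)) \<gamma> j l" for l
      using j by (intro Eratio_cong) auto
    ultimately show ?thesis
      by (simp only: risk_mult_Eratio_at_risk_def)
  qed
  finally show ?thesis .
qed

lemma risk_mult_Eratio_at_risk_measurable:
  assumes j: "j \<in> {1..m}" and sets_D: "\<And>i. sets (D i) = sets K"
    and meas: "w \<in> borel_measurable K" "s \<in> borel_measurable K" "L \<in> borel_measurable K"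
  shows "risk_mult_Eratio_at_risk n m w s L \<gamma> j \<in> borel_measurable (PiM {1..n+m} D)"
proof -
  have [measurable]: "(\<lambda>z. L (z (n+j))) \<in> borel_measurable (PiM {1..n+m} D)"
    using j sets_D meas(3) by (intro measurable_PiM_component_comp) auto
  have [measurable]: "(\<lambda>z. Eratio n m (\<lambda>i. w (z i)) (\<lambda>i. s (z i)) (\<lambda>i. L (z i)) \<gamma> j (L (z (n+j))))
      \<in> borel_measurable (PiM {1..n+m} D)"
    using j sets_D meas by (intro Eratio_measurable[OF j] measurable_PiM_component_comp) auto
  show ?thesis
    unfolding risk_mult_Eratio_at_risk_def[abs_def] by measurable
qed

lemma sum_transpose_risk_mult_Eratio_at_risk_le:
  fixes z :: "nat \<Rightarrow> 'a"
  assumes j: "j \<in> {1..m}"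
    and pos: "\<And>i. i \<in> augmented_calib n j \<Longrightarrow> 0 < w (z i) \<and> 0 \<le> L (z i)"
  shows "(\<Sum>k\<in>augmented_calib n j. ennreal (w (z k)) * risk_mult_Eratio_at_risk n m w s L \<gamma> j
            (\<lambda>i\<in>{1..n+m}. z (Transposition.transpose k (n+j) i)))
         \<le> (\<Sum>k\<in>augmented_calib n j. ennreal (w (z k)))"
proof -
  let ?S = "augmented_calib n j" and ?\<tau> = "\<lambda>k. Transposition.transpose k (n+j)"
  have "ennreal (w (z k)) * risk_mult_Eratio_at_risk n m w s L \<gamma> j (\<lambda>i\<in>{1..n+m}. z (?\<tau> k i))
      = ennreal (w (z k) * L (z k)) * e2ennreal (Eratio n m ((\<lambda>i. w (z i)) \<circ> ?\<tau> k)
          ((\<lambda>i. s (z i)) \<circ> ?\<tau> k) ((\<lambda>i. L (z i)) \<circ> ?\<tau> k) \<gamma> j (L (z k)))" if k: "k \<in> ?S" for k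
  proof -
    have "?\<tau> k i \<in> {1..n+m}" if "i \<in> {1..n+m}" for i
      using that j k by (auto simp: Transposition.transpose_def augmented_calib_def)
    then have "Eratio n m (\<lambda>i. w (restrict (\<lambda>i. z (?\<tau> k i)) {1..n+m} i))
          (\<lambda>i. s (restrict (\<lambda>i. z (?\<tau> k i)) {1..n+m} i)) (\<lambda>i. L (restrict (\<lambda>i. z (?\<tau> k i)) {1..n+m} i)) \<gamma> j l
        = Eratio n m ((\<lambda>i. w (z i)) \<circ> ?\<tau> k) ((\<lambda>i. s (z i)) \<circ> ?\<tau> k) ((\<lambda>i. L (z i)) \<circ> ?\<tau> k) \<gamma> j l" for l
      using j by (intro Eratio_cong) auto
    then show ?thesis
      using pos[OF k] j by (simp add: risk_mult_Eratio_at_risk_def ennreal_mult mult.assoc)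
  qed
  then have "(\<Sum>k\<in>?S. ennreal (w (z k)) * risk_mult_Eratio_at_risk n m w s L \<gamma> j
        (\<lambda>i\<in>{1..n+m}. z (?\<tau> k i))) \<le> ennreal (\<Sum>k\<in>?S. w (z k))"
    using sum_Eratio_transpose_le[OF j, where wv = "\<lambda>i. w (z i)" and Lv = "\<lambda>i. L (z i)"] pos by simp
  then show ?thesis
    using pos by (simp add: less_imp_le)
qed

lemma nn_integral_PiM_weight_mult_Eratio_at_risk_le:
  fixes D :: "nat \<Rightarrow> 'a measure" and w s L :: "'a \<Rightarrow> real"
  assumes prob: "\<And>i. prob_space (D i)" and sets_D: "\<And>i. sets (D i) = sets K"
    and D_S: "\<And>k. k \<in> augmented_calib n j \<Longrightarrow> D k = P"
    and Q: "prob_space (density P (\<lambda>x. ennreal (w x)))"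
    and meas: "w \<in> borel_measurable K" "s \<in> borel_measurable K" "L \<in> borel_measurable K"
    and pos: "\<And>x. x \<in> space K \<Longrightarrow> 0 < w x \<and> 0 \<le> L x"
    and j: "j \<in> {1..m}"
  shows "(\<integral>\<^sup>+ z. ennreal (w (z (n+j))) * risk_mult_Eratio_at_risk n m w s L \<gamma> j z \<partial>PiM {1..n+m} D) \<le> 1"
    (is "integral\<^sup>N (PiM ?I D) ?F \<le> 1")
proof -
  define S where "S = augmented_calib n j"
  have S: "finite S" "S \<subseteq> ?I" "n+j \<in> S" "card S = n+1"
    using j by (auto simp: S_def augmented_calib_def)
  have w_K: "(\<lambda>x. ennreal (w x)) \<in> borel_measurable K"
    using meas(1) by measurable
  moreover have "sets P = sets K"
    using D_S[of "n+j"] sets_D[of "n+j"] S(3) by (simp add: S_def)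
  ultimately have w_P: "(\<lambda>x. ennreal (w x)) \<in> borel_measurable P"
    by (simp cong: measurable_cong_sets)
  have w_component: "(\<lambda>z. ennreal (w (z i))) \<in> borel_measurable (PiM ?I D)" if "i \<in> ?I" for i
    using that sets_D w_K by (rule measurable_PiM_component_comp)
  have "?F \<in> borel_measurable (PiM ?I D)"
    using w_component S(2,3) risk_mult_Eratio_at_risk_measurable[OF j sets_D meas]
    by (intro borel_measurable_times_ennreal) auto
  then have "of_nat (n+1) * integral\<^sup>N (PiM ?I D) ?F
      = (\<integral>\<^sup>+ z. (\<Sum>k\<in>S. ?F (\<lambda>i\<in>?I. z (Transposition.transpose k (n+j) i))) \<partial>PiM ?I D)"
    unfolding S(4)[symmetric] using S prob D_S by (intro nn_integral_PiM_sum_transpose) (auto simp: S_def)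
  also have "\<dots> \<le> (\<integral>\<^sup>+ z. (\<Sum>k\<in>S. ennreal (w (z k))) \<partial>PiM ?I D)"
  proof (rule nn_integral_mono)
    fix z assume "z \<in> space (PiM ?I D)"
    then have "0 < w (z i) \<and> 0 \<le> L (z i)" if "i \<in> S" for i
      using that S(2) pos sets_eq_imp_space_eq[OF sets_D] by (auto simp: space_PiM)
    then show "(\<Sum>k\<in>S. ?F (\<lambda>i\<in>?I. z (Transposition.transpose k (n+j) i))) \<le> (\<Sum>k\<in>S. ennreal (w (z k)))"
      using sum_transpose_risk_mult_Eratio_at_risk_le[OF j, where n = n and z = z and s = s and \<gamma> = \<gamma>] j
      by (simp add: S_def)
  qed
  also have "\<dots> = (\<Sum>k\<in>S. \<integral>\<^sup>+ z. ennreal (w (z k)) \<partial>PiM ?I D)"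
    using S(2) w_component by (intro nn_integral_sum) auto
  also have "\<dots> = (\<Sum>k\<in>S. 1)"
  proof (rule sum.cong[OF refl])
    fix k assume "k \<in> S"
    then show "(\<integral>\<^sup>+ z. ennreal (w (z k)) \<partial>PiM ?I D) = 1"
      using S(2) prob D_S w_P Q by (intro nn_integral_PiM_component_prob_density) (auto simp: S_def)
  qed
  also have "\<dots> = of_nat (n+1) * 1"
    using S(4) by simp
  finally show ?thesis
    by (subst (asm) ennreal_mult_le_mult_iff) auto
qed

lemma nn_integral_PiM_risk_mult_Eratio_at_risk_le:
  fixes K P :: "'a measure" and w s L :: "'a \<Rightarrow> real"
  assumes P: "prob_space P" "sets P = sets K"
    and Q: "prob_space (density P (\<lambda>x. ennreal (w x)))"
    and meas: "w \<in> borel_measurable K" "s \<in> borel_measurable K" "L \<in> borel_measurable K"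
    and pos: "\<And>x. x \<in> space K \<Longrightarrow> 0 < w x \<and> 0 \<le> L x"
    and j: "j \<in> {1..m}"
  shows "integral\<^sup>N (PiM {1..n+m} (\<lambda>i. if i \<le> n then P else density P (\<lambda>x. ennreal (w x))))
           (risk_mult_Eratio_at_risk n m w s L \<gamma> j) \<le> 1"
    (is "integral\<^sup>N (PiM ?I ?D) ?g \<le> 1")
proof -
  define D' where "D' i = (if i \<le> n \<or> i = n+j then P else density P (\<lambda>x. ennreal (w x)))" for i
  have nj: "n+j \<in> ?I"
    using j by auto
  have prob: "prob_space (?D i)" "prob_space (D' i)" and sets_D': "sets (D' i) = sets K" for i
    using P Q by (auto simp: D'_def)
  have w_P: "(\<lambda>x. ennreal (w x)) \<in> borel_measurable P"
    using meas(1) unfolding measurable_cong_sets[OF P(2) refl] by measurable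
  have "PiM ?I ?D = density (PiM ?I D') (\<lambda>z. ennreal (w (z (n+j))))"
    using nj prob P j w_P by (intro PiM_density_component) (auto simp: D'_def)
  moreover have "(\<lambda>z. ennreal (w (z (n+j)))) \<in> borel_measurable (PiM ?I D')"
    using nj sets_D' w_P P(2) by (intro measurable_PiM_component_comp) (auto cong: measurable_cong_sets)
  ultimately have "integral\<^sup>N (PiM ?I ?D) ?g = (\<integral>\<^sup>+ z. ennreal (w (z (n+j))) * ?g z \<partial>PiM ?I D')"
    using risk_mult_Eratio_at_risk_measurable[OF j sets_D' meas] by (simp only: nn_integral_density)
  also have "\<dots> \<le> 1"
    using prob sets_D' Q meas pos j
    by (intro nn_integral_PiM_weight_mult_Eratio_at_risk_le) (auto simp: D'_def augmented_calib_def)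
  finally show ?thesis .
qed

theorem theorem6p2:
  fixes M :: "'o measure"
    and MX :: "'x measure" and MY :: "'y measure"
    and P :: "('x \<times> 'y) measure"
    and X :: "nat \<Rightarrow> 'o \<Rightarrow> 'x" and Y :: "nat \<Rightarrow> 'o \<Rightarrow> 'y"
    and w :: "'x \<Rightarrow> real" and s :: "'x \<Rightarrow> real"
    and risk :: "'f \<Rightarrow> 'x \<Rightarrow> 'y \<Rightarrow> real" and f :: 'f
    and n m j :: nat and \<gamma> :: real
  assumes "prob_space M"
    and "prob_space P" and "sets P = sets (MX \<Otimes>\<^sub>M MY)"
    and w_meas: "w \<in> borel_measurable MX"
    and w_pos: "\<forall>x\<in>space MX. 0 < w x"
    and Q_prob: "prob_space (density P (\<lambda>z. ennreal (w (fst z))))"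
    and s_meas: "s \<in> borel_measurable MX"
    and s_range: "\<forall>x\<in>space MX. 0 \<le> s x \<and> s x \<le> 1"
    and risk_meas: "(\<lambda>z. risk f (fst z) (snd z)) \<in> borel_measurable (MX \<Otimes>\<^sub>M MY)"
    and risk_range: "\<forall>x\<in>space MX. \<forall>y\<in>space MY. 0 \<le> risk f x y \<and> risk f x y \<le> 1"
    and X_meas: "\<forall>i\<in>{1..n+m}. X i \<in> measurable M MX"
    and Y_meas: "\<forall>i\<in>{1..n+m}. Y i \<in> measurable M MY"
    and indep: "prob_space.indep_vars M (\<lambda>i. MX \<Otimes>\<^sub>M MY) (\<lambda>i \<omega>. (X i \<omega>, Y i \<omega>)) {1..n+m}"
    and distP: "\<forall>i\<in>{1..n}. distr M (MX \<Otimes>\<^sub>M MY) (\<lambda>\<omega>. (X i \<omega>, Y i \<omega>)) = P"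
    and distQ: "\<forall>i\<in>{n+1..n+m}. distr M (MX \<Otimes>\<^sub>M MY) (\<lambda>\<omega>. (X i \<omega>, Y i \<omega>))
                   = density P (\<lambda>z. ennreal (w (fst z)))"
    and gamma: "0 < \<gamma>" "\<gamma> < 1"
    and j: "j \<in> {1..m}"
  shows "(\<forall>\<omega>\<in>space M.
            0 \<le> Evalue n m (\<lambda>i. w (X i \<omega>)) (\<lambda>i. s (X i \<omega>))
                   (\<lambda>i. risk f (X i \<omega>) (Y i \<omega>)) \<gamma> j)
       \<and> (\<integral>\<^sup>+ \<omega>. ennreal (risk f (X (n+j) \<omega>) (Y (n+j) \<omega>))
              * e2ennreal (Evalue n m (\<lambda>i. w (X i \<omega>)) (\<lambda>i. s (X i \<omega>))
                   (\<lambda>i. risk f (X i \<omega>) (Y i \<omega>)) \<gamma> j) \<partial>M) \<le> 1"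
proof -
  interpret M: prob_space M by fact
  let ?I = "{1..n+m}" and ?K = "MX \<Otimes>\<^sub>M MY"
  let ?D = "\<lambda>i. if i \<le> n then P else density P (\<lambda>z. ennreal (w (fst z)))"
  let ?E = "risk_mult_Eratio_at_risk n m (\<lambda>z. w (fst z)) (\<lambda>z. s (fst z)) (\<lambda>z. risk f (fst z) (snd z)) \<gamma> j"
  have XY: "X i \<omega> \<in> space MX \<and> Y i \<omega> \<in> space MY" if "i \<in> ?I" "\<omega> \<in> space M" for i \<omega>
    using that X_meas Y_meas by (auto intro: measurable_space)
  have "(\<integral>\<^sup>+ \<omega>. ennreal (risk f (X (n+j) \<omega>) (Y (n+j) \<omega>))
              * e2ennreal (Evalue n m (\<lambda>i. w (X i \<omega>)) (\<lambda>i. s (X i \<omega>))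
                   (\<lambda>i. risk f (X i \<omega>) (Y i \<omega>)) \<gamma> j) \<partial>M)
      \<le> (\<integral>\<^sup>+ \<omega>. ?E (\<lambda>i\<in>?I. (X i \<omega>, Y i \<omega>)) \<partial>M)"
    using risk_mult_Evalue_le_Eratio_at_risk[OF j, where z = "\<lambda>i. (X i \<omega>, Y i \<omega>)" and
        L = "\<lambda>z. risk f (fst z) (snd z)" and w = "\<lambda>z. w (fst z)" and s = "\<lambda>z. s (fst z)" and \<gamma> = \<gamma>
        for \<omega>] XY risk_range j
    by (intro nn_integral_mono) auto
  also have "\<dots> = integral\<^sup>N (PiM ?I ?D) ?E"
    using X_meas Y_meas distP distQ indep w_meas s_meas risk_meas j
    by (intro M.nn_integral_indep_vars_PiM risk_mult_Eratio_at_risk_measurable) (auto intro: measurable_Pair)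
  also have "\<dots> \<le> 1"
    using assms(2,3) Q_prob w_meas s_meas risk_meas w_pos risk_range j
    by (intro nn_integral_PiM_risk_mult_Eratio_at_risk_le) (auto simp: space_pair_measure)
  finally show ?thesis
    using XY w_pos risk_range j by (auto intro!: Evalue_nonneg)
qed

end
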